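(* Let $M=\{(z_1,z_2)\in\mathbb{C}^2:\operatorname{Im} z_2=|z_1|^2\}$. Let $\pi_1:U_1\to\mathbb{C}^2$ be the blow-up of the origin, with exceptional curve $E_1$, and let $M_1=\overline{\pi_1^{-1}(M\setminus\{0\})}$ be the proper transform of $M$. Let $U_1'$ be the affine chart of $U_1$ with coordinates $(z_1',z_2')$ in which $\pi_1(z_1',z_2')=(z_1',z_1'z_2')$, and let $\pi_2:U_2\to U_1'$ be the blow-up of the origin $0_1'$ of $U_1'$, with exceptional curve $E_2$, and $M_2=\overline{\pi_2^{-1}(M_1\cap U_1'\setminus\{0_1'\})}$. Let $U_2'$ be the affine chart of $U_2$ with coordinates $(u_1,u_2)$ in which $\pi_2(u_1,u_2)=(u_1,u_1u_2)$, and $0_2'$ its origin. Then: (a) $E_1\subset M_1$; (b) $M_2\cap E_2$ is a closed disk, given in $U_2'$ by $\{u_1=0,\ |u_2|\ge 1\}$ (together with the point of $E_2$ at infinity of this chart); (c) $0_2'\notin M_2$, so that if $\pi_3$ is the blow-up of $U_2$ at $0_2'$ with exceptional curve $E_3$, the proper transform $M_3$ of $M_2$ satisfies $M_3\cap E_3=\varnothing$. *)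

theory Defs
  imports "HOL-Analysis.Analysis"
begin

text \<open>A point of the projective line CP^1
  (a complex line through 0 in C^2) is represented by the orthogonal projection matrix
  onto that line, written as ((P11, P12), (P21, P22)).  This realises CP^1 with its
  usual topology as a subspace of C^4.\<close>

type_synonym c2 = "complex \<times> complex"
type_synonym mat2 = "(complex \<times> complex) \<times> (complex \<times> complex)"

definition proj_line :: "c2 \<Rightarrow> mat2" where
  "proj_line v = (let a = fst v; b = snd v;
                      n = complex_of_real ((cmod a)^2 + (cmod b)^2)
                  in ((a * cnj a / n, a * cnj b / n), (b * cnj a / n, b * cnj b / n)))"

definition blowup :: "(c2 \<times> mat2) set" where
  "blowup = {(z, proj_line v) | z v. v \<noteq> (0, 0) \<and> (\<exists>c. z = (c * fst v, c * snd v))}"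

definition exceptional :: "(c2 \<times> mat2) set" where
  "exceptional = {p \<in> blowup. fst p = (0, 0)}"

definition proper_transform :: "c2 set \<Rightarrow> (c2 \<times> mat2) set" where
  "proper_transform S = closure {p \<in> blowup. fst p \<in> S - {(0, 0)}} \<inter> blowup"

definition chart :: "c2 \<Rightarrow> c2 \<times> mat2" where
  "chart q = ((fst q, fst q * snd q), proj_line (1, snd q))"

definition hyperquadric :: "c2 set" where
  "hyperquadric = {(z1, z2). Im z2 = (cmod z1)^2}"

end

theory Submission
  imports Defs
begin

text \<open>In the chart (z1, z1 z2) the hyperquadric reads Im(a b) = |a|^2, which contains the
  whole axis a = 0, i.e. the exceptional curve; this is (a).  Blowing up once more, a point
  (0, u) of the next exceptional curve is a limit of points (a, u) with Im(a^2 u) = |a|^2,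
  and writing a = e w with |w| = 1 this is solvable iff |u| \<ge> 1.  Conversely
  |a|^2 = Im(a b) \<le> |a| |b| shows that the second proper transform only meets lines
  [v1 : v2] with |v1| \<le> |v2|.  Hence it meets the second exceptional curve in a closed disc
  centred at the point [0 : 1], which is (b), and it stays away from the origin of the
  chart (u1, u1 u2), where |u2| \<ge> 1 fails; this is (c).\<close>

lemma proj_line_smult:
  assumes "c \<noteq> 0"
  shows "proj_line (c * a, c * b) = proj_line (a, b)"
proof -
  define K where "K = c * cnj c"
  define N where "N = complex_of_real ((cmod a)^2 + (cmod b)^2)"
  have "K = complex_of_real ((cmod c)^2)"
    unfolding K_def complex_norm_square ..
  then have norm: "complex_of_real ((cmod (c * a))^2 + (cmod (c * b))^2) = K * N"
    and "K \<noteq> 0"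
    using assms by (simp_all add: N_def norm_mult algebra_simps)
  then have cancel: "(K * x) / (K * N) = x / N" for x
    by simp
  have "c * x * cnj (c * y) = K * (x * cnj y)" for x y
    unfolding K_def by (simp add: ac_simps)
  then show ?thesis
    unfolding proj_line_def Let_def fst_conv snd_conv norm N_def[symmetric]
    by (simp only: cancel)
qed

lemma continuous_on_proj_line: "continuous_on (- {(0, 0)}) proj_line"
proof -
  have "complex_of_real ((cmod (fst v))^2 + (cmod (snd v))^2) \<noteq> 0" if "v \<noteq> (0, 0)" for v
  proof -
    have "(cmod (fst v))^2 + (cmod (snd v))^2 \<noteq> 0"
      using that by (cases v) (simp add: add_nonneg_eq_0_iff)
    then show ?thesis
      using of_real_eq_0_iff by blast
  qed
  then show ?thesis
    unfolding proj_line_def Let_def by (intro continuous_intros) auto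
qed

lemma Re_proj_line_diag:
  fixes v :: c2
  defines "N \<equiv> (cmod (fst v))^2 + (cmod (snd v))^2"
  shows "Re (fst (fst (proj_line v))) = (cmod (fst v))^2 / N"
    and "Re (snd (snd (proj_line v))) = (cmod (snd v))^2 / N"
  unfolding proj_line_def Let_def N_def
  by (simp_all only: fst_conv snd_conv flip: complex_norm_square of_real_divide, simp_all)

lemma inj_proj_line_snd1: "inj (\<lambda>w. proj_line (w, 1))"
proof (rule injI)
  have "snd (fst (proj_line (w, 1))) / snd (snd (proj_line (w, 1))) = w" for w
  proof -
    have "complex_of_real ((cmod w)^2 + 1) \<noteq> 0"
      by (metis add_nonneg_pos of_real_eq_0_iff zero_le_power2 zero_less_one order_less_irrefl)
    then show ?thesis
      unfolding proj_line_def Let_def by simp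
  qed
  then show "w = w'" if "proj_line (w, 1) = proj_line (w', 1)" for w w'
    using that by metis
qed

text \<open>Points over lines [v1 : v2] with |v1| \<le> |v2|, read off the diagonal of the projection
  matrix (see proj_line_in_steep_lines_iff).\<close>

definition steep_lines :: "(c2 \<times> mat2) set" where
  "steep_lines = {p. Re (fst (fst (snd p))) \<le> Re (snd (snd (snd p)))}"

lemma closed_steep_lines: "closed steep_lines"
  unfolding steep_lines_def by (intro closed_Collect_le continuous_intros)

lemma proj_line_in_steep_lines_iff:
  assumes "v \<noteq> (0, 0)"
  shows "(z, proj_line v) \<in> steep_lines \<longleftrightarrow> cmod (fst v) \<le> cmod (snd v)"
proof -
  have "0 < (cmod (fst v))^2 + (cmod (snd v))^2"
    using assms by (cases v) (auto simp: add_pos_nonneg add_nonneg_pos)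
  then have "(z, proj_line v) \<in> steep_lines \<longleftrightarrow> (cmod (fst v))^2 \<le> (cmod (snd v))^2"
    unfolding steep_lines_def by (simp add: Re_proj_line_diag divide_le_cancel)
  also have "\<dots> \<longleftrightarrow> cmod (fst v) \<le> cmod (snd v)"
    by (simp add: power2_le_iff_abs_le)
  finally show ?thesis .
qed

definition punctured_preimage :: "c2 set \<Rightarrow> (c2 \<times> mat2) set" where
  "punctured_preimage S = {p \<in> blowup. fst p \<in> S - {(0, 0)}}"

lemma proper_transform_eq: "proper_transform S = closure (punctured_preimage S) \<inter> blowup"
  unfolding proper_transform_def punctured_preimage_def ..

lemma proper_transform_subset_closure: "proper_transform S \<subseteq> fst -` closure S"
proof -
  have "punctured_preimage S \<subseteq> fst -` closure S"
    unfolding punctured_preimage_def using closure_subset by fastforce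
  then have "closure (punctured_preimage S) \<subseteq> fst -` closure S"
    by (intro closure_minimal closed_vimage_fst) simp_all
  then show ?thesis
    unfolding proper_transform_eq by blast
qed

lemma proper_transform_Int_exceptional_empty:
  "(0, 0) \<notin> closure S \<Longrightarrow> proper_transform S \<inter> exceptional = {}"
  using proper_transform_subset_closure unfolding exceptional_def by fastforce

lemma chart_in_blowup: "chart q \<in> blowup"
  unfolding chart_def blowup_def
  by (intro CollectI exI[of _ "(fst q, fst q * snd q)"] exI[of _ "(1, snd q)"]) auto

lemma chart_in_punctured_preimage_iff:
  "chart q \<in> punctured_preimage S \<longleftrightarrow> fst q \<noteq> 0 \<and> (fst q, fst q * snd q) \<in> S"
  using chart_in_blowup unfolding punctured_preimage_def by (auto simp: chart_def)

lemma continuous_on_chart: "continuous_on UNIV chart"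
  unfolding chart_def
  by (intro continuous_intros continuous_on_compose2[OF continuous_on_proj_line]) auto

lemma chart_limit_in_closure:
  assumes "X \<longlonglongrightarrow> q" and "\<And>k. chart (X k) \<in> S"
  shows "chart q \<in> closure S"
proof -
  have "(\<lambda>k. chart (X k)) \<longlonglongrightarrow> chart q"
    by (rule continuous_on_tendsto_compose[OF continuous_on_chart assms(1)]) simp_all
  then show ?thesis
    using assms(2) by (intro closure_sequential[THEN iffD2] exI[of _ "\<lambda>k. chart (X k)"]) simp
qed

lemma one_over_Suc_tendsto_0: "(\<lambda>k. complex_of_real (1 / real (Suc k))) \<longlonglongrightarrow> 0"
  using tendsto_of_real[OF LIMSEQ_inverse_real_of_nat, where 'a=complex]
  by (simp add: inverse_eq_divide)

text \<open>The exceptional curve near the line [0 : 1], the only point of it not covered by chart.\<close>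

definition exceptional_chart :: "complex \<Rightarrow> c2 \<times> mat2" where
  "exceptional_chart w = ((0, 0), proj_line (w, 1))"

lemma inj_exceptional_chart: "inj exceptional_chart"
  using inj_proj_line_snd1 unfolding exceptional_chart_def inj_def by simp

lemma continuous_on_exceptional_chart: "continuous_on UNIV exceptional_chart"
  unfolding exceptional_chart_def
  by (intro continuous_intros continuous_on_compose2[OF continuous_on_proj_line]) auto

lemma exceptional_chart_eq_chart: "w \<noteq> 0 \<Longrightarrow> exceptional_chart w = chart (0, 1 / w)"
  unfolding exceptional_chart_def chart_def using proj_line_smult[of w 1 "1 / w"] by simp

lemma exceptional_eq: "exceptional = range exceptional_chart \<union> {chart (0, 0)}"
proof
  show "exceptional \<subseteq> range exceptional_chart \<union> {chart (0, 0)}"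
  proof
    fix p assume "p \<in> exceptional"
    then obtain a b where p: "p = ((0, 0), proj_line (a, b))" and ab: "(a, b) \<noteq> (0, 0)"
      unfolding exceptional_def blowup_def by auto
    show "p \<in> range exceptional_chart \<union> {chart (0, 0)}"
    proof (cases "b = 0")
      case True
      then have "proj_line (a, b) = proj_line (1, 0)"
        using ab proj_line_smult[of a 1 0] by simp
      then show ?thesis
        using p by (simp add: chart_def)
    next
      case False
      then have "proj_line (a, b) = proj_line (a / b, 1)"
        using proj_line_smult[of b "a / b" 1] by simp
      then show ?thesis
        using p by (simp add: exceptional_chart_def)
    qed
  qed
  have "((0, 0), proj_line v) \<in> blowup" if "v \<noteq> (0, 0)" for v
    unfolding blowup_def using that by (intro CollectI exI[of _ "(0, 0)"] exI[of _ v]) auto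
  then show "range exceptional_chart \<union> {chart (0, 0)} \<subseteq> exceptional"
    unfolding exceptional_def exceptional_chart_def chart_def by auto
qed

lemma exceptional_chart_0_in_closure:
  assumes "\<And>u. 1 \<le> cmod u \<Longrightarrow> chart (0, u) \<in> closure S"
  shows "exceptional_chart 0 \<in> closure S"
proof -
  have "exceptional_chart (of_real (1 / real (Suc k))) \<in> closure S" for k
    using assms[of "of_nat (Suc k)"] exceptional_chart_eq_chart[of "of_real (1 / real (Suc k))"]
    by (simp del: of_nat_Suc)
  moreover have "(\<lambda>k. exceptional_chart (of_real (1 / real (Suc k)))) \<longlonglongrightarrow> exceptional_chart 0"
    by (rule continuous_on_tendsto_compose[OF continuous_on_exceptional_chart one_over_Suc_tendsto_0])
      simp_all
  ultimately show ?thesis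
    by (metis (mono_tags) closure_closure closure_sequential)
qed

lemma closed_hyperquadric: "closed hyperquadric"
proof -
  have "hyperquadric = {z. Im (snd z) = (cmod (fst z))^2}"
    unfolding hyperquadric_def by auto
  also have "closed \<dots>"
    by (intro closed_Collect_eq continuous_intros)
  finally show ?thesis .
qed

text \<open>The hyperquadric in the coordinates of chart; it contains the axis a = 0 and turns out
  to be exactly the part of M1 seen by chart.\<close>

definition hyperquadric1 :: "c2 set" where
  "hyperquadric1 = {(a, b). Im (a * b) = (cmod a)^2}"

lemma chart_axis_in_closure_hyperquadric:
  "chart (0, t) \<in> closure (punctured_preimage hyperquadric)"
proof -
  obtain w where w: "cmod w = 1" "Im (w * t) = 0"
  proof (cases "t = 0")
    case False
    have "cnj t / cmod t * t = complex_of_real (cmod t)"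
      using False by (simp add: field_simps power2_eq_square flip: complex_norm_square)
    with False show thesis
      by (intro that[of "cnj t / cmod t"]) (simp_all add: norm_divide)
  qed (use that[of 1] in simp)
  \<comment> \<open>Im(e w (t + i e cnj w)) = e Im(w t) + e^2 = |e w|^2\<close>
  have mem: "chart (of_real e * w, t + \<i> * of_real e * cnj w) \<in> punctured_preimage hyperquadric"
    if "e > 0" for e :: real
  proof -
    have "w * cnj w = 1"
      using w(1) by (simp flip: complex_norm_square)
    then have "of_real e * w * (t + \<i> * of_real e * cnj w) = of_real e * (w * t) + \<i> * of_real (e^2)"
      by (simp add: algebra_simps power2_eq_square)
    then show ?thesis
      using w that unfolding chart_in_punctured_preimage_iff hyperquadric_def
      by (auto simp: norm_mult)
  qed
  have "(\<lambda>k. (of_real (1 / real (Suc k)) * w, t + \<i> * of_real (1 / real (Suc k)) * cnj w))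
    \<longlonglongrightarrow> (0 * w, t + \<i> * 0 * cnj w)"
    by (intro tendsto_intros one_over_Suc_tendsto_0)
  then have "(\<lambda>k. (of_real (1 / real (Suc k)) * w, t + \<i> * of_real (1 / real (Suc k)) * cnj w))
    \<longlonglongrightarrow> (0, t)"
    by simp
  then show ?thesis
    by (rule chart_limit_in_closure) (rule mem, simp)
qed

lemma chart_vimage_proper_transform_hyperquadric:
  "chart -` proper_transform hyperquadric = hyperquadric1"
proof
  show "chart -` proper_transform hyperquadric \<subseteq> hyperquadric1"
    using proper_transform_subset_closure[of hyperquadric] closed_hyperquadric
    by (auto simp: chart_def hyperquadric_def hyperquadric1_def)
  have "chart q \<in> closure (punctured_preimage hyperquadric)" if "q \<in> hyperquadric1" for q
  proof (cases "fst q = 0")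
    case True
    then show ?thesis
      using chart_axis_in_closure_hyperquadric[of "snd q"] by (metis prod.collapse)
  next
    case False
    then have "chart q \<in> punctured_preimage hyperquadric"
      using that by (auto simp: chart_in_punctured_preimage_iff hyperquadric_def hyperquadric1_def)
    then show ?thesis
      using closure_subset by blast
  qed
  then show "hyperquadric1 \<subseteq> chart -` proper_transform hyperquadric"
    using chart_in_blowup by (auto simp: proper_transform_eq)
qed

lemma exceptional_subset_proper_transform_hyperquadric:
  "exceptional \<subseteq> proper_transform hyperquadric"
proof -
  have "exceptional_chart w \<in> closure (punctured_preimage hyperquadric)" for w
  proof (cases "w = 0")
    case True
    then show ?thesis
      using exceptional_chart_0_in_closure chart_axis_in_closure_hyperquadric by blast
  qed (simp add: exceptional_chart_eq_chart chart_axis_in_closure_hyperquadric)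
  then have "range exceptional_chart \<union> {chart (0, 0)} \<subseteq> closure (punctured_preimage hyperquadric)"
    using chart_axis_in_closure_hyperquadric by blast
  then show ?thesis
    unfolding proper_transform_eq exceptional_eq[symmetric]
    using exceptional_def by blast
qed

lemma chart_axis_in_closure_hyperquadric1:
  assumes "1 \<le> cmod u"
  shows "chart (0, u) \<in> closure (punctured_preimage hyperquadric1)"
proof -
  \<comment> \<open>Choose |w| = 1 with w^2 u = c + i; then Im((e w)^2 u) = e^2 = |e w|^2.\<close>
  define c where "c = sqrt ((cmod u)^2 - 1)"
  have "cmod (complex_of_real c + \<i>) = sqrt (c^2 + 1)"
    by (simp add: cmod_def)
  also have "\<dots> = cmod u"
    using assms by (simp add: c_def)
  finally have norm_c: "cmod (complex_of_real c + \<i>) = cmod u" .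
  define w where "w = csqrt ((complex_of_real c + \<i>) / u)"
  have w2: "w^2 * u = complex_of_real c + \<i>"
    using assms by (auto simp: w_def)
  then have "(cmod w)^2 * cmod u = cmod u"
    using norm_c by (metis norm_mult norm_power)
  then have w: "cmod w = 1"
    using assms norm_ge_zero[of w] by (auto simp: power2_eq_1_iff)
  have mem: "chart (of_real e * w, u) \<in> punctured_preimage hyperquadric1" if "e > 0" for e :: real
  proof -
    have "of_real e * w * (of_real e * w * u) = of_real (e^2) * (w^2 * u)"
      by (simp add: algebra_simps power2_eq_square)
    also have "\<dots> = of_real (e^2) * (of_real c + \<i>)"
      by (simp only: w2)
    finally have "Im (of_real e * w * (of_real e * w * u)) = e^2"
      by (simp only:) simp
    then show ?thesis
      using w that unfolding chart_in_punctured_preimage_iff hyperquadric1_def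
      by (auto simp: norm_mult)
  qed
  have "(\<lambda>k. (of_real (1 / real (Suc k)) * w, u)) \<longlonglongrightarrow> (0 * w, u)"
    by (intro tendsto_intros one_over_Suc_tendsto_0)
  then have "(\<lambda>k. (of_real (1 / real (Suc k)) * w, u)) \<longlonglongrightarrow> (0, u)"
    by simp
  then show ?thesis
    by (rule chart_limit_in_closure) (rule mem, simp)
qed

lemma chart_in_steep_lines_iff: "chart q \<in> steep_lines \<longleftrightarrow> 1 \<le> cmod (snd q)"
  unfolding chart_def by (simp add: proj_line_in_steep_lines_iff)

lemma exceptional_chart_in_steep_lines_iff: "exceptional_chart w \<in> steep_lines \<longleftrightarrow> cmod w \<le> 1"
  unfolding exceptional_chart_def by (simp add: proj_line_in_steep_lines_iff)

lemma exceptional_Int_steep_lines: "exceptional \<inter> steep_lines = exceptional_chart ` cball 0 1"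
  unfolding exceptional_eq
  by (auto simp: chart_in_steep_lines_iff exceptional_chart_in_steep_lines_iff)

lemma punctured_preimage_hyperquadric1_subset: "punctured_preimage hyperquadric1 \<subseteq> steep_lines"
proof
  fix p assume "p \<in> punctured_preimage hyperquadric1"
  then obtain v c where p: "p = ((c * fst v, c * snd v), proj_line v)" and v: "v \<noteq> (0, 0)"
    and c: "c \<noteq> 0" and quadric: "Im (c * fst v * (c * snd v)) = (cmod (c * fst v))^2"
    unfolding punctured_preimage_def blowup_def hyperquadric1_def by auto
  have "(cmod (c * fst v))^2 \<le> cmod (c * fst v) * cmod (c * snd v)"
    using quadric abs_Im_le_cmod[of "c * fst v * (c * snd v)"] by (simp add: norm_mult)
  then have "cmod (c * fst v) \<le> cmod (c * snd v)"
    by (cases "fst v = 0") (simp_all add: power2_eq_square c)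
  then show "p \<in> steep_lines"
    using c v p by (simp add: norm_mult proj_line_in_steep_lines_iff)
qed

lemma proper_transform_hyperquadric1_subset: "proper_transform hyperquadric1 \<subseteq> steep_lines"
  using closure_minimal[OF punctured_preimage_hyperquadric1_subset closed_steep_lines]
  unfolding proper_transform_eq by blast

lemma proper_transform_hyperquadric1_Int_exceptional:
  "proper_transform hyperquadric1 \<inter> exceptional = exceptional_chart ` cball 0 1"
proof
  show "proper_transform hyperquadric1 \<inter> exceptional \<subseteq> exceptional_chart ` cball 0 1"
    using proper_transform_hyperquadric1_subset exceptional_Int_steep_lines by blast
  have "exceptional_chart w \<in> closure (punctured_preimage hyperquadric1)" if "cmod w \<le> 1" for w
  proof (cases "w = 0")
    case True
    then show ?thesis
      using exceptional_chart_0_in_closure chart_axis_in_closure_hyperquadric1 by blast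
  next
    case False
    then show ?thesis
      using that chart_axis_in_closure_hyperquadric1[of "1 / w"]
      by (simp add: exceptional_chart_eq_chart norm_divide)
  qed
  then show "exceptional_chart ` cball 0 1 \<subseteq> proper_transform hyperquadric1 \<inter> exceptional"
    using exceptional_eq exceptional_def by (auto simp: proper_transform_eq)
qed

lemma exceptional_chart_cball:
  "exceptional_chart ` cball 0 1
    = chart ` {(0, u) | u. 1 \<le> cmod u} \<union> {((0, 0), proj_line (0, 1))}"
proof -
  have "exceptional_chart ` (cball 0 1 - {0}) = (\<lambda>u. chart (0, u)) ` {u. 1 \<le> cmod u}"
  proof (intro equalityI image_subsetI)
    fix w :: complex assume "w \<in> cball 0 1 - {0}"
    then have "exceptional_chart w = chart (0, 1 / w)" and "1 \<le> cmod (1 / w)"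
      by (simp_all add: exceptional_chart_eq_chart norm_divide)
    then show "exceptional_chart w \<in> (\<lambda>u. chart (0, u)) ` {u. 1 \<le> cmod u}"
      by (intro image_eqI) simp_all
  next
    fix u :: complex assume u: "u \<in> {u. 1 \<le> cmod u}"
    then have "u \<noteq> 0"
      by auto
    with u have "chart (0, u) = exceptional_chart (1 / u)" and "1 / u \<in> cball 0 1 - {0}"
      by (auto simp: exceptional_chart_eq_chart norm_divide divide_le_eq)
    then show "chart (0, u) \<in> exceptional_chart ` (cball 0 1 - {0})"
      by (rule image_eqI)
  qed
  moreover have "exceptional_chart ` cball 0 1
      = insert (exceptional_chart 0) (exceptional_chart ` (cball 0 1 - {0}))"
    by (simp flip: image_insert add: insert_absorb)
  moreover have "chart ` {(0, u) | u. 1 \<le> cmod u} = (\<lambda>u. chart (0, u)) ` {u. 1 \<le> cmod u}"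
    by auto
  ultimately show ?thesis
    by (simp add: exceptional_chart_def)
qed

lemma exceptional_chart_cball_homeomorphic:
  "exceptional_chart ` cball 0 1 homeomorphic cball (0::complex) 1"
  using homeomorphic_compact[OF compact_cball
      continuous_on_subset[OF continuous_on_exceptional_chart subset_UNIV] refl
      inj_on_subset[OF inj_exceptional_chart subset_UNIV]]
  by (subst homeomorphic_sym)

lemma origin_notin_closure_chart_vimage_proper_transform_hyperquadric1:
  "(0, 0) \<notin> closure (chart -` proper_transform hyperquadric1)"
proof -
  have "chart -` proper_transform hyperquadric1 \<subseteq> {q. 1 \<le> cmod (snd q)}"
    using proper_transform_hyperquadric1_subset chart_in_steep_lines_iff by blast
  then have "closure (chart -` proper_transform hyperquadric1) \<subseteq> {q. 1 \<le> cmod (snd q)}"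
    by (rule closure_minimal) (intro closed_Collect_le continuous_intros)
  then show ?thesis
    by auto
qed

theorem mainTheorem4:
  fixes M1 M2 M3 E1 E2 E3 :: "(c2 \<times> mat2) set"
  assumes "M1 = proper_transform hyperquadric"
      and "M2 = proper_transform (chart -` M1)"
      and "M3 = proper_transform (chart -` M2)"
      and "E1 = exceptional" and "E2 = exceptional" and "E3 = exceptional"
  shows "E1 \<subseteq> M1
    \<and> M2 \<inter> E2 = chart ` {(0, u2) | u2. cmod u2 \<ge> 1} \<union> {((0, 0), proj_line (0, 1))}
    \<and> (M2 \<inter> E2) homeomorphic cball (0::complex) 1
    \<and> chart (0, 0) \<notin> M2
    \<and> M3 \<inter> E3 = {}"
proof -
  have M2: "M2 = proper_transform hyperquadric1"
    using assms(1,2) chart_vimage_proper_transform_hyperquadric by simp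
  have M2_E2: "M2 \<inter> E2 = exceptional_chart ` cball 0 1"
    using M2 assms(5) proper_transform_hyperquadric1_Int_exceptional by simp
  have "(0, 0) \<notin> closure (chart -` M2)"
    using M2 origin_notin_closure_chart_vimage_proper_transform_hyperquadric1 by simp
  then have "M3 \<inter> E3 = {}" and "chart (0, 0) \<notin> M2"
    using assms(3,6) proper_transform_Int_exceptional_empty closure_subset[of "chart -` M2"]
    by auto
  then show ?thesis
    using assms(1,4) exceptional_subset_proper_transform_hyperquadric
      exceptional_chart_cball exceptional_chart_cball_homeomorphic
    unfolding M2_E2 by (intro conjI) simp_all
qed

end
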